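(* Let $R$ be a ring and $I$ an ideal of $R$ with $I\subseteq P(R)$. If $R/I$ is almost Armendariz, then $R$ is almost Armendariz.
   Context: All rings are associative with identity. For a ring $R$, $P(R)$ denotes the prime radical of $R$ (the intersection of all prime ideals of $R$, equivalently the set of strongly nilpotent elements of $R$). A ring $R$ is called almost Armendariz if whenever $f(x)=\sum_{i=0}^m a_ix^i$ and $g(x)=\sum_{j=0}^n b_jx^j\in R[x]$ satisfy $f(x)g(x)=0$, then $a_ib_j\in P(R)$ for all $0\le i\le m$, $0\le j\le n$. *)

theory Defs
  imports "HOL-Algebra.Algebra" "HOL-Algebra.Ideal_Product"
begin

definition nc_prime_ideal :: "('a, 'b) ring_scheme \<Rightarrow> 'a set \<Rightarrow> bool" where
  "nc_prime_ideal R P \<longleftrightarrow> ideal P R \<and> P \<noteq> carrier R \<and>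
     (\<forall>A B. ideal A R \<longrightarrow> ideal B R \<longrightarrow> ideal_prod R A B \<subseteq> P \<longrightarrow> A \<subseteq> P \<or> B \<subseteq> P)"

definition prime_radical :: "('a, 'b) ring_scheme \<Rightarrow> 'a set" where
  "prime_radical R = carrier R \<inter> \<Inter> {P. nc_prime_ideal R P}"

definition almost_armendariz :: "('a, 'b) ring_scheme \<Rightarrow> bool" where
  "almost_armendariz R \<longleftrightarrow>
     (\<forall>f \<in> carrier (UP R). \<forall>g \<in> carrier (UP R).
        f \<otimes>\<^bsub>UP R\<^esub> g = \<zero>\<^bsub>UP R\<^esub> \<longrightarrow>
        (\<forall>i j. coeff (UP R) f i \<otimes>\<^bsub>R\<^esub> coeff (UP R) g j \<in> prime_radical R))"

end

theory Submission
  imports Defs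
begin

text \<open>Every prime ideal of \<open>R\<close> contains \<open>I\<close> and so is the preimage of a prime ideal of \<open>R/I\<close>;
  hence an element whose class lies in the prime radical of \<open>R/I\<close> lies in the prime radical
  of \<open>R\<close>. Reducing coefficients modulo \<open>I\<close> is a ring homomorphism \<open>R[x] \<rightarrow> (R/I)[x]\<close>, so a
  zero product \<open>f g = 0\<close> over \<open>R\<close> gives a zero product over \<open>R/I\<close>, where the almost Armendariz
  property puts every \<open>a\<^sub>i b\<^sub>j + I\<close> into the prime radical of \<open>R/I\<close>.\<close>

lemma (in ring) ideal_prod_subsetI:
  assumes "ideal P R" and "\<And>a b. a \<in> A \<Longrightarrow> b \<in> B \<Longrightarrow> a \<otimes> b \<in> P"
  shows "ideal_prod R A B \<subseteq> P"
proof
  fix s assume "s \<in> ideal_prod R A B"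
  then show "s \<in> P"
    by induction (use assms in \<open>auto intro: additive_subgroup.a_closed ideal.axioms(1)\<close>)
qed

lemma (in ring) rcos_mem_image_iff:
  assumes I: "ideal I R" and P: "ideal P R" and "I \<subseteq> P" and a: "a \<in> carrier R"
  shows "I +> a \<in> (+>) I ` P \<longleftrightarrow> a \<in> P"
proof -
  have "(+>) I ` P \<subseteq> carrier (R Quot I)"
    using ring_ideal_imp_quot_ideal[OF I P] additive_subgroup.a_subset ideal_def by blast
  then have "a \<in> \<Union> ((+>) I ` P) \<longleftrightarrow> I +> a \<in> (+>) I ` P"
    using canonical_proj_vimage_mem_iff[OF I _ a] by blast
  moreover have "\<Union> ((+>) I ` P) = P"
    using ideal_incl_iff[OF I P] \<open>I \<subseteq> P\<close> by blast
  ultimately show ?thesis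
    by simp
qed

lemma (in ring) quot_ideal_is_image:
  assumes "ideal I R" and "ideal J' (R Quot I)"
  obtains J where "ideal J R" and "I \<subseteq> J" and "J' = (+>) I ` J"
  using quot_ideal_correspondence[OF assms(1)] assms(2) unfolding bij_betw_def by blast

lemma (in ring) nc_prime_ideal_quot:
  assumes I: "ideal I R" and P: "nc_prime_ideal R P" and "I \<subseteq> P"
  shows "nc_prime_ideal (R Quot I) ((+>) I ` P)"
proof -
  interpret Q: ring_hom_ring R "R Quot I" "(+>) I"
    using I ideal.rcos_ring_hom_ring by blast
  have P_ideal: "ideal P R" and "P \<noteq> carrier R"
    and P_prime: "\<And>A B. ideal A R \<Longrightarrow> ideal B R \<Longrightarrow> ideal_prod R A B \<subseteq> P \<Longrightarrow> A \<subseteq> P \<or> B \<subseteq> P"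
    using P unfolding nc_prime_ideal_def by auto
  note mem_iff = rcos_mem_image_iff[OF I P_ideal \<open>I \<subseteq> P\<close>]
  have "\<one> \<notin> P"
    using \<open>P \<noteq> carrier R\<close> P_ideal ideal.one_imp_carrier by blast
  then have "I +> \<one> \<notin> (+>) I ` P"
    using mem_iff[OF one_closed] by simp
  then have proper: "(+>) I ` P \<noteq> carrier (R Quot I)"
    using Q.hom_closed[OF one_closed] by blast
  have "A' \<subseteq> (+>) I ` P \<or> B' \<subseteq> (+>) I ` P"
    if "ideal A' (R Quot I)" and "ideal B' (R Quot I)"
      and AB: "ideal_prod (R Quot I) A' B' \<subseteq> (+>) I ` P" for A' B'
  proof -
    obtain A where A: "ideal A R" "A' = (+>) I ` A"
      using quot_ideal_is_image[OF I \<open>ideal A' (R Quot I)\<close>] by blast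
    obtain B where B: "ideal B R" "B' = (+>) I ` B"
      using quot_ideal_is_image[OF I \<open>ideal B' (R Quot I)\<close>] by blast
    have "a \<otimes> b \<in> P" if "a \<in> A" "b \<in> B" for a b
    proof -
      have carr: "a \<in> carrier R" "b \<in> carrier R"
        using ideal.Icarr[OF A(1) \<open>a \<in> A\<close>] ideal.Icarr[OF B(1) \<open>b \<in> B\<close>] .
      have "I +> a \<in> A'" "I +> b \<in> B'"
        using that A(2) B(2) by blast+
      then have "(I +> a) \<otimes>\<^bsub>R Quot I\<^esub> (I +> b) \<in> ideal_prod (R Quot I) A' B'"
        by (rule ideal_prod.prod)
      then have "I +> (a \<otimes> b) \<in> (+>) I ` P"
        using AB Q.hom_mult[OF carr] by auto
      then show ?thesis
        using mem_iff[OF m_closed[OF carr]] by simp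
    qed
    then have "ideal_prod R A B \<subseteq> P"
      by (rule ideal_prod_subsetI[OF P_ideal])
    then have "A \<subseteq> P \<or> B \<subseteq> P"
      using P_prime A(1) B(1) by blast
    then show ?thesis
      using A(2) B(2) by blast
  qed
  then show ?thesis
    unfolding nc_prime_ideal_def using ring_ideal_imp_quot_ideal[OF I P_ideal] proper by blast
qed

lemma (in ring) prime_radical_of_quot:
  assumes I: "ideal I R" and "I \<subseteq> prime_radical R" and x: "x \<in> carrier R"
    and x_rad: "I +> x \<in> prime_radical (R Quot I)"
  shows "x \<in> prime_radical R"
  unfolding prime_radical_def
proof (intro IntI InterI)
  fix P assume "P \<in> {P. nc_prime_ideal R P}"
  then have P: "nc_prime_ideal R P" by simp
  have "I \<subseteq> P"
    using \<open>I \<subseteq> prime_radical R\<close> P unfolding prime_radical_def by blast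
  have "nc_prime_ideal (R Quot I) ((+>) I ` P)"
    using nc_prime_ideal_quot[OF I P \<open>I \<subseteq> P\<close>] .
  then have "I +> x \<in> (+>) I ` P"
    using x_rad unfolding prime_radical_def by blast
  moreover have "ideal P R"
    using P unfolding nc_prime_ideal_def by blast
  ultimately show "x \<in> P"
    using rcos_mem_image_iff[OF I _ \<open>I \<subseteq> P\<close> x] by blast
qed (rule x)

lemma (in ring_hom_ring) up_map_closed:
  assumes "f \<in> carrier (UP R)"
  shows "(\<lambda>n. h (f n)) \<in> carrier (UP S)"
proof -
  have f: "f \<in> up R"
    using assms by (simp add: UP_def)
  then obtain m where "bound \<zero> m f"
    by blast
  then have "bound \<zero>\<^bsub>S\<^esub> m (\<lambda>n. h (f n))"
    unfolding bound_def by simp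
  moreover have "h (f n) \<in> carrier S" for n
    using f by (simp add: mem_upD)
  ultimately show ?thesis
    by (auto simp: UP_def)
qed

lemma (in ring_hom_ring) up_map_mult:
  assumes f: "f \<in> carrier (UP R)" and g: "g \<in> carrier (UP R)"
  shows "(\<lambda>n. h ((f \<otimes>\<^bsub>UP R\<^esub> g) n)) = (\<lambda>n. h (f n)) \<otimes>\<^bsub>UP S\<^esub> (\<lambda>n. h (g n))"
proof
  fix n
  have fg: "f i \<in> carrier R" "g i \<in> carrier R" for i
    using f g by (auto simp: UP_def mem_upD)
  have "h ((f \<otimes>\<^bsub>UP R\<^esub> g) n) = h (\<Oplus>i \<in> {..n}. f i \<otimes> g (n - i))"
    using f g by (simp add: UP_def)
  also have "\<dots> = (\<Oplus>\<^bsub>S\<^esub>i \<in> {..n}. h (f i \<otimes> g (n - i)))"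
    using fg by (simp add: comp_def Pi_def)
  also have "\<dots> = (\<Oplus>\<^bsub>S\<^esub>i \<in> {..n}. h (f i) \<otimes>\<^bsub>S\<^esub> h (g (n - i)))"
    using fg by (intro S.finsum_cong') auto
  also have "\<dots> = ((\<lambda>n. h (f n)) \<otimes>\<^bsub>UP S\<^esub> (\<lambda>n. h (g n))) n"
    using up_map_closed[OF f] up_map_closed[OF g] by (simp add: UP_def)
  finally show "h ((f \<otimes>\<^bsub>UP R\<^esub> g) n) = ((\<lambda>n. h (f n)) \<otimes>\<^bsub>UP S\<^esub> (\<lambda>n. h (g n))) n" .
qed

lemma (in ring_hom_ring) almost_armendariz_reflect:
  assumes S_aa: "almost_armendariz S"
    and reflect: "\<And>x. x \<in> carrier R \<Longrightarrow> h x \<in> prime_radical S \<Longrightarrow> x \<in> prime_radical R"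
  shows "almost_armendariz R"
  unfolding almost_armendariz_def
proof (intro ballI impI allI)
  fix f g i j
  assume f: "f \<in> carrier (UP R)" and g: "g \<in> carrier (UP R)"
    and fg: "f \<otimes>\<^bsub>UP R\<^esub> g = \<zero>\<^bsub>UP R\<^esub>"
  have "(\<lambda>n. h (f n)) \<otimes>\<^bsub>UP S\<^esub> (\<lambda>n. h (g n)) = \<zero>\<^bsub>UP S\<^esub>"
    using up_map_mult[OF f g] fg by (simp add: UP_def)
  then have "h (f i) \<otimes>\<^bsub>S\<^esub> h (g j) \<in> prime_radical S"
    using S_aa up_map_closed[OF f] up_map_closed[OF g]
    unfolding almost_armendariz_def by (fastforce simp: UP_def)
  moreover have "f i \<in> carrier R" "g j \<in> carrier R"
    using f g by (auto simp: UP_def mem_upD)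
  ultimately show "UnivPoly.up_ring.coeff (UP R) f i \<otimes> UnivPoly.up_ring.coeff (UP R) g j \<in> prime_radical R"
    using reflect f g by (simp add: UP_def)
qed

theorem proposition2p4:
  fixes R :: "('a, 'b) ring_scheme" and I :: "'a set"
  assumes "ring R"
    and "ideal I R"
    and "I \<subseteq> prime_radical R"
    and "almost_armendariz (R Quot I)"
  shows "almost_armendariz R"
proof -
  interpret Q: ring_hom_ring R "R Quot I" "a_r_coset R I"
    using ideal.rcos_ring_hom_ring[OF \<open>ideal I R\<close>] .
  show ?thesis
    using Q.almost_armendariz_reflect \<open>almost_armendariz (R Quot I)\<close>
      ring.prime_radical_of_quot[OF assms(1-3)] by blast
qed

end
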